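(* For any forecasting system $\varphi$ and any countable set $\mathscr S$ of selection processes, there is at least one path $\omega\in\Omega$ that is $\mathscr S$-random for $\varphi$.
   Context: $\Omega=\{0,1\}^{\mathbb N}$ is the set of paths $\omega=(\omega_1,\omega_2,\dots)$, $\omega_{1:n}=(\omega_1,\dots,\omega_n)$, $\omega_{1:0}$ the empty sequence; $\mathbb S=\bigcup_{n\ge0}\{0,1\}^n$ the set of situations. A forecasting system is a map $\varphi$ from $\mathbb S$ to closed subintervals of $[0,1]$, with $\underline\varphi(s)=\min\varphi(s)$, $\overline\varphi(s)=\max\varphi(s)$. A selection process is a map $S:\mathbb S\to\{0,1\}$. For a countable set $\mathscr S$ of selection processes, $\omega$ is $\mathscr S$-random for $\varphi$ if for every $S\in\mathscr S$ with $\lim_n\sum_{k=0}^{n-1}S(\omega_{1:k})=\infty$: $\liminf_n\frac{\sum_{k=0}^{n-1}S(\omega_{1:k})[\omega_{k+1}-\underline\varphi(\omega_{1:k})]}{\sum_{k=0}^{n-1}S(\omega_{1:k})}\ge0$ and $\limsup_n\frac{\sum_{k=0}^{n-1}S(\omega_{1:k})[\omega_{k+1}-\overline\varphi(\omega_{1:k})]}{\sum_{k=0}^{n-1}S(\omega_{1:k})}\le0$. *)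

theory Defs
  imports "HOL-Analysis.Analysis"
begin

text \<open>Paths: \<open>\<omega> :: nat \<Rightarrow> bool\<close>, with \<open>\<omega> k\<close> the outcome \<open>\<omega>_{k+1}\<close> (True = 1).  The initial segment \<open>\<omega>_{1:n}\<close> is \<open>prefix \<omega> n\<close>.\<close>

type_synonym path = "nat \<Rightarrow> bool"
type_synonym situation = "bool list"

definition prefix :: "path \<Rightarrow> nat \<Rightarrow> situation" where
  "prefix \<omega> n = map \<omega> [0..<n]"

definition bit :: "bool \<Rightarrow> real" where
  "bit b = (if b then 1 else 0)"

text \<open>A forecasting system assigns to each situation a closed subinterval
  \<open>[lo s, hi s]\<close> of \<open>[0,1]\<close>; we represent it by its endpoint pair.\<close>

type_synonym forecasting_system = "situation \<Rightarrow> real \<times> real"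

definition forecasting_system :: "forecasting_system \<Rightarrow> bool" where
  "forecasting_system \<phi> \<longleftrightarrow> (\<forall>s. 0 \<le> fst (\<phi> s) \<and> fst (\<phi> s) \<le> snd (\<phi> s) \<and> snd (\<phi> s) \<le> 1)"

definition lower :: "forecasting_system \<Rightarrow> situation \<Rightarrow> real" where
  "lower \<phi> s = fst (\<phi> s)"

definition upper :: "forecasting_system \<Rightarrow> situation \<Rightarrow> real" where
  "upper \<phi> s = snd (\<phi> s)"

type_synonym selection_process = "situation \<Rightarrow> bool"

definition sel :: "selection_process \<Rightarrow> situation \<Rightarrow> real" where
  "sel S s = (if S s then 1 else 0)"

definition random_for :: "selection_process set \<Rightarrow> forecasting_system \<Rightarrow> path \<Rightarrow> bool" where
  "random_for SS \<phi> \<omega> \<longleftrightarrow>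
    (\<forall>S\<in>SS. filterlim (\<lambda>n. \<Sum>k<n. sel S (prefix \<omega> k)) at_top sequentially \<longrightarrow>
       liminf (\<lambda>n. ereal ((\<Sum>k<n. sel S (prefix \<omega> k) * (bit (\<omega> k) - lower \<phi> (prefix \<omega> k)))
                          / (\<Sum>k<n. sel S (prefix \<omega> k)))) \<ge> 0 \<and>
       limsup (\<lambda>n. ereal ((\<Sum>k<n. sel S (prefix \<omega> k) * (bit (\<omega> k) - upper \<phi> (prefix \<omega> k)))
                          / (\<Sum>k<n. sel S (prefix \<omega> k)))) \<le> 0)"

end

theory Submission
  imports Defs
begin

text \<open>
  For every \<open>S \<in> SS\<close> and every rate \<open>\<epsilon> = \<plusminus>1/(2q)\<close> consider the gambler who, in each
  situation selected by \<open>S\<close>, stakes the fraction \<open>\<epsilon>\<close> of his capital on the next outcome at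
  the price \<open>lower \<phi>\<close>. Mixing these countably many capital processes with weights
  \<open>2^-(i+1)\<close> gives a single capital process, and choosing each outcome against the sign of
  the mixture's stake keeps it below its initial value 1; hence every single capital stays
  bounded along the resulting path. Since \<open>ln (1 + y) \<ge> y - 2y\<^sup>2\<close>, a bounded capital for rate
  \<open>\<epsilon>\<close> gives \<open>\<epsilon> X\<^sub>n \<le> C + 2\<epsilon>\<^sup>2 N\<^sub>n\<close>, where \<open>X\<^sub>n\<close> is the selected sum of
  \<open>bit (\<omega> k) - lower \<phi> (prefix \<omega> k)\<close> and \<open>N\<^sub>n\<close> the number of selections. Letting
  \<open>\<epsilon>\<close> range over both signs and all sizes yields \<open>X\<^sub>n / N\<^sub>n \<longrightarrow> 0\<close>; the condition for
  \<open>upper \<phi>\<close> follows because the corresponding sum is dominated by \<open>X\<^sub>n\<close>.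
\<close>

lemma ln_one_plus_ge:
  fixes y :: real
  assumes "\<bar>y\<bar> \<le> 1/2"
  shows "y - 2 * y^2 \<le> ln (1 + y)"
proof (cases "y \<ge> 0")
  case True
  then have "y - y^2 \<le> ln (1 + y)"
    using ln_one_plus_pos_lower_bound[of y] assms by auto
  then show ?thesis
    using zero_le_power2[of y] by linarith
next
  case False
  then show ?thesis
    using ln_one_minus_pos_lower_bound[of "-y"] assms by auto
qed

lemma sum_le_ln_of_prod_le:
  fixes g t :: "nat \<Rightarrow> real"
  assumes \<epsilon>: "\<bar>\<epsilon>\<bar> \<le> 1/2" and g: "\<And>k. \<bar>g k\<bar> \<le> 1" and t: "\<And>k. (g k)^2 \<le> t k"
    and prod: "(\<Prod>k<n. 1 + \<epsilon> * g k) \<le> B"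
  shows "\<epsilon> * (\<Sum>k<n. g k) \<le> ln B + 2 * \<epsilon>^2 * (\<Sum>k<n. t k)"
proof -
  have small: "\<bar>\<epsilon> * g k\<bar> \<le> 1/2" for k
    using mult_mono[OF \<epsilon> g[of k]] by (simp add: abs_mult)
  have pos: "1 + \<epsilon> * g k > 0" for k
    using small[of k] by (auto simp: abs_le_iff)
  have "(\<Sum>k<n. \<epsilon> * g k - 2 * \<epsilon>^2 * t k) \<le> (\<Sum>k<n. ln (1 + \<epsilon> * g k))"
  proof (rule sum_mono)
    fix k
    have "(\<epsilon> * g k)^2 \<le> \<epsilon>^2 * t k"
      using mult_left_mono[OF t[of k], of "\<epsilon>^2"] by (simp add: power_mult_distrib)
    then show "\<epsilon> * g k - 2 * \<epsilon>^2 * t k \<le> ln (1 + \<epsilon> * g k)"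
      using ln_one_plus_ge[OF small[of k]] by linarith
  qed
  also have "\<dots> = ln (\<Prod>k<n. 1 + \<epsilon> * g k)"
    using pos by (intro ln_prod[symmetric]) (auto simp: less_le)
  also have "\<dots> \<le> ln B"
  proof (rule ln_mono)
    show "(\<Prod>k<n. 1 + \<epsilon> * g k) > 0"
      using pos by (simp add: prod_pos)
  qed (use prod in auto)
  finally show ?thesis
    by (simp add: sum_subtractf sum_distrib_left)
qed

lemma ratio_tendsto_zero:
  fixes X N :: "nat \<Rightarrow> real"
  assumes N: "filterlim N at_top sequentially"
    and bound: "\<And>\<delta>. \<delta> > 0 \<Longrightarrow> \<exists>C. \<forall>n. \<bar>X n\<bar> \<le> C + \<delta> * N n"
  shows "(\<lambda>n. X n / N n) \<longlonglongrightarrow> 0"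
proof (rule tendstoI)
  fix e :: real
  assume e: "e > 0"
  then obtain C where C: "\<And>n. \<bar>X n\<bar> \<le> C + e/2 * N n"
    using bound[of "e/2"] by auto
  have "eventually (\<lambda>n. N n > max 0 (2 * C / e)) sequentially"
    using N unfolding filterlim_at_top_dense by blast
  then show "eventually (\<lambda>n. dist (X n / N n) 0 < e) sequentially"
  proof (rule eventually_mono)
    fix n
    assume "N n > max 0 (2 * C / e)"
    then have "N n > 0" "C < e/2 * N n"
      using e by (auto simp: field_simps)
    then show "dist (X n / N n) 0 < e"
      using C[of n] by (simp add: abs_divide divide_less_eq)
  qed
qed

lemma prefix_Suc: "prefix \<omega> (Suc n) = prefix \<omega> n @ [\<omega> n]"
  by (simp add: prefix_def)

lemma length_prefix [simp]: "length (prefix \<omega> n) = n"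
  by (simp add: prefix_def)

lemma take_prefix: "k \<le> n \<Longrightarrow> take k (prefix \<omega> n) = prefix \<omega> k"
  by (simp add: prefix_def take_map)

lemma nth_prefix: "k < n \<Longrightarrow> prefix \<omega> n ! k = \<omega> k"
  by (simp add: prefix_def)

fun prefix_of :: "(situation \<Rightarrow> bool) \<Rightarrow> nat \<Rightarrow> situation" where
  "prefix_of c 0 = []"
| "prefix_of c (Suc n) = prefix_of c n @ [c (prefix_of c n)]"

definition path_of :: "(situation \<Rightarrow> bool) \<Rightarrow> path" where
  "path_of c n = c (prefix_of c n)"

lemma prefix_path_of: "prefix (path_of c) n = prefix_of c n"
  by (induction n) (simp_all add: prefix_Suc path_of_def, simp add: prefix_def)

lemma path_of_eq: "path_of c n = c (prefix (path_of c) n)"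
  by (simp add: path_of_def prefix_path_of)

text \<open>The capital of a gambler who starts with 1 and in each situation \<open>t\<close> stakes the
  fraction \<open>h t\<close> of his current capital on the next outcome at price \<open>p t\<close>.\<close>

definition capital :: "(situation \<Rightarrow> real) \<Rightarrow> (situation \<Rightarrow> real) \<Rightarrow> situation \<Rightarrow> real" where
  "capital p h s = (\<Prod>k<length s. 1 + h (take k s) * (bit (s ! k) - p (take k s)))"

lemma capital_Nil [simp]: "capital p h [] = 1"
  by (simp add: capital_def)

lemma capital_snoc: "capital p h (s @ [b]) = capital p h s * (1 + h s * (bit b - p s))"
  unfolding capital_def by (auto simp: nth_append intro!: prod.cong)

lemma capital_prefix:
  "capital p h (prefix \<omega> n) = (\<Prod>k<n. 1 + h (prefix \<omega> k) * (bit (\<omega> k) - p (prefix \<omega> k)))"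
  unfolding capital_def by (simp add: take_prefix nth_prefix)

lemma stake_factor_bounds:
  assumes "0 \<le> q" "q \<le> 1" "\<bar>x\<bar> \<le> 1"
  shows "0 \<le> 1 + x * (bit b - q)" "1 + x * (bit b - q) \<le> 2"
proof -
  have "\<bar>x * (bit b - q)\<bar> \<le> 1"
    using mult_mono[OF assms(3), of "\<bar>bit b - q\<bar>" 1] assms(1,2) by (auto simp: abs_mult bit_def)
  then show "0 \<le> 1 + x * (bit b - q)" "1 + x * (bit b - q) \<le> 2"
    by (simp_all add: abs_le_iff)
qed

text \<open>\<open>rate\<close> enumerates the rates \<open>1/(2q)\<close>, \<open>q \<in> \<int>\<close> (with the junk value 0 for \<open>q = 0\<close>),
  and \<open>stake\<close> enumerates all pairs of a selection process in \<open>SS\<close> and a rate.\<close>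

definition rate :: "nat \<Rightarrow> real" where
  "rate j = 1 / (2 * real_of_int (int_decode j))"

definition stake :: "selection_process set \<Rightarrow> nat \<Rightarrow> situation \<Rightarrow> real" where
  "stake SS i s = (case prod_decode i of (a, j) \<Rightarrow> rate j * sel (from_nat_into SS a) s)"

lemma abs_rate_le: "\<bar>rate j\<bar> \<le> 1/2"
  by (cases "int_decode j = 0") (auto simp: rate_def abs_mult field_simps)

lemma abs_stake_le: "\<bar>stake SS i s\<bar> \<le> 1/2"
  using abs_rate_le by (auto simp: stake_def sel_def split: prod.split)

lemma stake_prod_encode:
  "stake SS (prod_encode (a, int_encode q)) = (\<lambda>s. 1 / (2 * of_int q) * sel (from_nat_into SS a) s)"
  by (simp add: stake_def rate_def fun_eq_iff)

lemma summable_half_power_mult: "summable (\<lambda>i. (1/2) ^ Suc i * c :: real)"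
  using power_half_series by (auto simp: sums_iff intro: summable_mult2)

context
  fixes p :: "situation \<Rightarrow> real"
  assumes p_nonneg: "\<And>s. 0 \<le> p s" and p_le_1: "\<And>s. p s \<le> 1"
begin

lemma capital_nonneg: "(\<And>s. \<bar>h s\<bar> \<le> 1) \<Longrightarrow> 0 \<le> capital p h s"
  unfolding capital_def by (intro prod_nonneg stake_factor_bounds p_nonneg p_le_1)

lemma capital_le_power: "(\<And>s. \<bar>h s\<bar> \<le> 1) \<Longrightarrow> capital p h s \<le> 2 ^ length s"
  unfolding capital_def by (intro prod_le_power conjI stake_factor_bounds p_nonneg p_le_1) simp_all

context
  fixes h :: "nat \<Rightarrow> situation \<Rightarrow> real"
  assumes h: "\<And>i s. \<bar>h i s\<bar> \<le> 1"
begin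

definition mixture :: "situation \<Rightarrow> real" where
  "mixture s = (\<Sum>i. (1/2) ^ Suc i * capital p (h i) s)"

definition mixture_stake :: "situation \<Rightarrow> real" where
  "mixture_stake s = (\<Sum>i. (1/2) ^ Suc i * capital p (h i) s * h i s)"

lemma summable_mixture: "summable (\<lambda>i. (1/2) ^ Suc i * capital p (h i) s)"
  by (rule summable_comparison_test'[OF summable_half_power_mult[of "2 ^ length s"]])
     (simp add: capital_nonneg capital_le_power h)

lemma summable_mixture_stake: "summable (\<lambda>i. (1/2) ^ Suc i * capital p (h i) s * h i s)"
proof (rule summable_comparison_test'[OF summable_half_power_mult[of "2 ^ length s"]])
  fix i
  have "\<bar>h i s\<bar> * capital p (h i) s \<le> 1 * 2 ^ length s"
    using h by (intro mult_mono capital_le_power capital_nonneg) auto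
  then show "norm ((1/2) ^ Suc i * capital p (h i) s * h i s) \<le> (1/2) ^ Suc i * 2 ^ length s"
    using capital_nonneg[OF h] by (simp add: abs_mult mult.commute mult.left_commute)
qed

lemma mixture_Nil: "mixture [] = 1"
  using power_half_series by (simp add: mixture_def sums_iff)

lemma mixture_snoc: "mixture (s @ [b]) = mixture s + (bit b - p s) * mixture_stake s"
proof -
  have "mixture (s @ [b]) = (\<Sum>i. (1/2) ^ Suc i * capital p (h i) s
                                  + (bit b - p s) * ((1/2) ^ Suc i * capital p (h i) s * h i s))"
    unfolding mixture_def capital_snoc by (simp add: field_simps)
  also have "\<dots> = mixture s + (\<Sum>i. (bit b - p s) * ((1/2) ^ Suc i * capital p (h i) s * h i s))"
    unfolding mixture_def
    by (rule suminf_add[symmetric, OF summable_mixture summable_mult[OF summable_mixture_stake]])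
  also have "\<dots> = mixture s + (bit b - p s) * mixture_stake s"
    unfolding mixture_stake_def suminf_mult[OF summable_mixture_stake] ..
  finally show ?thesis .
qed

lemma capital_le_mixture: "capital p (h i) s \<le> 2 ^ Suc i * mixture s"
proof -
  have "(1/2) ^ Suc i * capital p (h i) s \<le> mixture s"
    using sum_le_suminf[OF summable_mixture, of "{i}"] capital_nonneg[OF h]
    by (simp add: mixture_def)
  then show ?thesis
    by (simp add: field_simps)
qed

end

lemma countermove_le_zero: "(bit (m \<le> 0) - p s) * m \<le> 0"
  using p_nonneg[of s] p_le_1[of s] by (auto simp: bit_def mult_nonneg_nonpos mult_nonpos_nonneg)

lemma exists_path_bounding_capitals:
  fixes h :: "nat \<Rightarrow> situation \<Rightarrow> real"
  assumes h: "\<And>i s. \<bar>h i s\<bar> \<le> 1"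
  shows "\<exists>\<omega>. \<forall>i n. capital p (h i) (prefix \<omega> n) \<le> 2 ^ Suc i"
proof -
  \<comment> \<open>Moving against the stake of the mixture, the path never lets the mixture increase.\<close>
  define \<omega> where "\<omega> = path_of (\<lambda>s. mixture_stake h s \<le> 0)"
  have mixture_le_1: "mixture h (prefix \<omega> n) \<le> 1" for n
  proof (induction n)
    case 0
    then show ?case by (simp add: prefix_def mixture_Nil[OF h])
  next
    case (Suc n)
    have "\<omega> n = (mixture_stake h (prefix \<omega> n) \<le> 0)"
      unfolding \<omega>_def by (rule path_of_eq)
    then have "(bit (\<omega> n) - p (prefix \<omega> n)) * mixture_stake h (prefix \<omega> n) \<le> 0"
      using countermove_le_zero by simp
    then show ?case
      using Suc.IH by (simp add: prefix_Suc mixture_snoc[OF h])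
  qed
  have "capital p (h i) (prefix \<omega> n) \<le> 2 ^ Suc i" for i n
  proof -
    have "capital p (h i) (prefix \<omega> n) \<le> 2 ^ Suc i * mixture h (prefix \<omega> n)"
      by (rule capital_le_mixture[OF h])
    also have "\<dots> \<le> 2 ^ Suc i"
      using mixture_le_1[of n] by (simp add: mult_left_le)
    finally show ?thesis .
  qed
  then show ?thesis by blast
qed

lemma excess_le_of_capital_le:
  assumes \<epsilon>: "\<bar>\<epsilon>\<bar> \<le> 1/2"
    and cap: "capital p (\<lambda>s. \<epsilon> * sel S s) (prefix \<omega> n) \<le> B"
  shows "\<epsilon> * (\<Sum>k<n. sel S (prefix \<omega> k) * (bit (\<omega> k) - p (prefix \<omega> k)))
           \<le> ln B + 2 * \<epsilon>^2 * (\<Sum>k<n. sel S (prefix \<omega> k))"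
proof (rule sum_le_ln_of_prod_le[OF \<epsilon>])
  have d: "\<bar>bit b - p s\<bar> \<le> 1" for b s
    using p_nonneg[of s] p_le_1[of s] by (simp add: bit_def)
  show "\<bar>sel S (prefix \<omega> k) * (bit (\<omega> k) - p (prefix \<omega> k))\<bar> \<le> 1" for k
    using d by (simp add: sel_def)
  show "(sel S (prefix \<omega> k) * (bit (\<omega> k) - p (prefix \<omega> k)))^2 \<le> sel S (prefix \<omega> k)" for k
    using d[of "\<omega> k" "prefix \<omega> k"] by (simp add: sel_def abs_square_le_1)
  show "(\<Prod>k<n. 1 + \<epsilon> * (sel S (prefix \<omega> k) * (bit (\<omega> k) - p (prefix \<omega> k)))) \<le> B"
    using cap by (simp add: capital_prefix mult.assoc)
qed

lemma selected_excess_sublinear: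
  assumes SS: "countable SS" "S \<in> SS"
    and bounded: "\<And>i n. capital p (stake SS i) (prefix \<omega> n) \<le> 2 ^ Suc i"
    and \<delta>: "\<delta> > 0"
  shows "\<exists>C. \<forall>n. \<bar>\<Sum>k<n. sel S (prefix \<omega> k) * (bit (\<omega> k) - p (prefix \<omega> k))\<bar>
                 \<le> C + \<delta> * (\<Sum>k<n. sel S (prefix \<omega> k))"
proof -
  define X where "X n = (\<Sum>k<n. sel S (prefix \<omega> k) * (bit (\<omega> k) - p (prefix \<omega> k)))" for n
  define N where "N n = (\<Sum>k<n. sel S (prefix \<omega> k))" for n
  obtain a where a: "from_nat_into SS a = S"
    using from_nat_into_surj[OF SS] by blast
  obtain m :: nat where m: "m > 0" "1 / real m \<le> \<delta>"
    using \<delta> real_arch_inverse[of \<delta>] by (auto simp: field_simps)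
  define L :: "int \<Rightarrow> real" where "L q = ln (2 ^ Suc (prod_encode (a, int_encode q)))" for q
  have excess: "X n / (2 * of_int q) \<le> L q + N n / (2 * of_int q ^ 2)" if "q \<noteq> 0" for q n
  proof -
    have \<epsilon>: "\<bar>1 / (2 * of_int q)\<bar> \<le> (1/2 :: real)"
      using that by (simp add: abs_mult field_simps)
    have "capital p (\<lambda>s. 1 / (2 * of_int q) * sel S s) (prefix \<omega> n) \<le> 2 ^ Suc (prod_encode (a, int_encode q))"
      using bounded[of "prod_encode (a, int_encode q)" n] unfolding stake_prod_encode a .
    from excess_le_of_capital_le[OF \<epsilon> this]
    show ?thesis
      by (simp add: X_def N_def L_def power_divide)
  qed
  have N_nonneg: "0 \<le> N n" for n
    by (simp add: N_def sel_def sum_nonneg)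
  have "\<bar>X n\<bar> \<le> 2 * m * max (L m) (L (- m)) + \<delta> * N n" for n
  proof -
    have "N n / m \<le> \<delta> * N n"
      using mult_right_mono[OF m(2) N_nonneg[of n]] by simp
    moreover have "X n \<le> 2 * m * L m + N n / m" "- X n \<le> 2 * m * L (- m) + N n / m"
      using excess[of m n] excess[of "- m" n] m(1) by (simp_all add: field_simps power2_eq_square)
    moreover have "2 * m * L m \<le> 2 * m * max (L m) (L (- m))"
      and "2 * m * L (- m) \<le> 2 * m * max (L m) (L (- m))"
      by (simp_all add: mult_left_mono)
    ultimately show ?thesis
      unfolding abs_le_iff by (intro conjI) linarith+
  qed
  then show ?thesis
    unfolding X_def N_def by blast
qed

end

lemma
  assumes "forecasting_system \<phi>"
  shows lower_nonneg: "0 \<le> lower \<phi> s"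
    and lower_le_upper: "lower \<phi> s \<le> upper \<phi> s"
    and lower_le_1: "lower \<phi> s \<le> 1"
  using assms unfolding forecasting_system_def lower_def upper_def by (meson order_trans)+

lemma random_for_if_capitals_bounded:
  assumes \<phi>: "forecasting_system \<phi>" and SS: "countable SS"
    and bounded: "\<And>i n. capital (lower \<phi>) (stake SS i) (prefix \<omega> n) \<le> 2 ^ Suc i"
  shows "random_for SS \<phi> \<omega>"
  unfolding random_for_def
proof (intro ballI impI conjI)
  fix S
  assume S: "S \<in> SS"
  define N where "N n = (\<Sum>k<n. sel S (prefix \<omega> k))" for n
  define X where "X n = (\<Sum>k<n. sel S (prefix \<omega> k) * (bit (\<omega> k) - lower \<phi> (prefix \<omega> k)))" for n
  define Y where "Y n = (\<Sum>k<n. sel S (prefix \<omega> k) * (bit (\<omega> k) - upper \<phi> (prefix \<omega> k)))" for n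
  assume "filterlim (\<lambda>n. \<Sum>k<n. sel S (prefix \<omega> k)) at_top sequentially"
  then have N: "filterlim N at_top sequentially"
    by (simp add: N_def[abs_def])
  have "(\<lambda>n. X n / N n) \<longlonglongrightarrow> 0"
    using N selected_excess_sublinear[OF lower_nonneg[OF \<phi>] lower_le_1[OF \<phi>] SS S bounded]
    unfolding X_def N_def by (rule ratio_tendsto_zero)
  then have lim: "(\<lambda>n. ereal (X n / N n)) \<longlonglongrightarrow> 0"
    by (simp add: zero_ereal_def tendsto_ereal)
  then show "0 \<le> liminf (\<lambda>n. ereal (X n / N n))"
    by (simp add: lim_imp_Liminf)
  have "eventually (\<lambda>n. N n > 0) sequentially"
    using N unfolding filterlim_at_top_dense by blast
  then have "eventually (\<lambda>n. Y n / N n \<le> X n / N n) sequentially"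
  proof (rule eventually_mono)
    fix n
    assume "0 < N n"
    moreover have "Y n \<le> X n"
      unfolding X_def Y_def
      by (intro sum_mono mult_left_mono) (auto simp: sel_def lower_le_upper[OF \<phi>])
    ultimately show "Y n / N n \<le> X n / N n"
      by (simp add: divide_right_mono)
  qed
  then have "limsup (\<lambda>n. ereal (Y n / N n)) \<le> limsup (\<lambda>n. ereal (X n / N n))"
    by (intro Limsup_mono) simp
  also have "\<dots> = 0"
    using lim by (simp add: lim_imp_Limsup)
  finally show "limsup (\<lambda>n. ereal (Y n / N n)) \<le> 0" .
qed

theorem corollary25:
  fixes \<phi> :: forecasting_system and SS :: "selection_process set"
  assumes "forecasting_system \<phi>" and "countable SS"
  shows "\<exists>\<omega> :: path. random_for SS \<phi> \<omega>"
proof -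
  have "\<bar>stake SS i s\<bar> \<le> 1" for i s
    using abs_stake_le[of SS i s] by simp
  then obtain \<omega> where "\<forall>i n. capital (lower \<phi>) (stake SS i) (prefix \<omega> n) \<le> 2 ^ Suc i"
    using exists_path_bounding_capitals lower_nonneg[OF assms(1)] lower_le_1[OF assms(1)] by metis
  then show ?thesis
    using random_for_if_capitals_bounded[OF assms] by blast
qed

end
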